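(* Let $F\colon\mathbf{A}\to\mathbf{C}$ be a discrete opfibration and let $J\colon\mathbf{A}\to\mathbf{B}$ be a cosieve, via which $\mathbf{A}$ is regarded as an out-degree-zero subcategory of $\mathbf{B}$. Let $B$ be an object of $\mathbf{B}$ not in $\mathbf{A}$ and let $C$ be an object of $\mathbf{C}$. Let $\sim$ be the equivalence relation on $\coprod_{A\in\mathrm{ob}\,\mathbf{A}}\mathbf{C}(FA,C)\times\mathbf{B}(B,A)$ generated by $(c,a\circ b)\sim(c\circ Fa,b)$ for all objects $A_1,A_2$ of $\mathbf{A}$, all $b\in\mathbf{B}(B,A_1)$, all $a\in\mathbf{A}(A_1,A_2)$ and all $c\in\mathbf{C}(FA_2,C)$. Then for all objects $A_1,A_2$ of $\mathbf{A}$, all $b_1\in\mathbf{B}(B,A_1)$, $b_2\in\mathbf{B}(B,A_2)$, $c_1\in\mathbf{C}(FA_1,C)$ and $c_2\in\mathbf{C}(FA_2,C)$, if $(c_1,b_1)\sim(c_2,b_2)$ then $\varphi_{F,A_1}(c_1)\circ b_1=\varphi_{F,A_2}(c_2)\circ b_2$.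
   Context: A functor $F\colon\mathbf{A}\to\mathbf{C}$ is a discrete opfibration if for each object $A$ of $\mathbf{A}$ and each morphism $c$ of $\mathbf{C}$ with domain $FA$ there is a unique morphism of $\mathbf{A}$ with domain $A$ mapped by $F$ to $c$; this unique morphism is denoted $\varphi_{F,A}(c)$. A cosieve is an injective-on-objects discrete opfibration; equivalently (up to isomorphism) the inclusion of an out-degree-zero subcategory, i.e. a subcategory such that every morphism of the ambient category whose domain lies in the subcategory belongs to the subcategory. $\mathbf{B}(X,Y)$ denotes the set of morphisms $X\to Y$ in $\mathbf{B}$; composites in the conclusion are taken in $\mathbf{B}$. *)

theory Defs
  imports Main
begin

text \<open>Small categories, given by a set of objects, a set of arrows, domain, codomain,
identities and composition. Comp g f denotes g composed after f (defined when Cod f = Dom g).\<close>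

record ('o, 'm) category =
  Obj :: "'o set"
  Arr :: "'m set"
  Dom :: "'m \<Rightarrow> 'o"
  Cod :: "'m \<Rightarrow> 'o"
  Id  :: "'o \<Rightarrow> 'm"
  Comp :: "'m \<Rightarrow> 'm \<Rightarrow> 'm"

definition is_category :: "('o, 'm) category \<Rightarrow> bool" where
  "is_category X \<longleftrightarrow>
     (\<forall>f \<in> Arr X. Dom X f \<in> Obj X \<and> Cod X f \<in> Obj X) \<and>
     (\<forall>x \<in> Obj X. Id X x \<in> Arr X \<and> Dom X (Id X x) = x \<and> Cod X (Id X x) = x) \<and>
     (\<forall>f \<in> Arr X. \<forall>g \<in> Arr X. Cod X f = Dom X g \<longrightarrow>
        Comp X g f \<in> Arr X \<and> Dom X (Comp X g f) = Dom X f \<and> Cod X (Comp X g f) = Cod X g) \<and>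
     (\<forall>f \<in> Arr X. Comp X f (Id X (Dom X f)) = f \<and> Comp X (Id X (Cod X f)) f = f) \<and>
     (\<forall>f \<in> Arr X. \<forall>g \<in> Arr X. \<forall>h \<in> Arr X. Cod X f = Dom X g \<longrightarrow> Cod X g = Dom X h \<longrightarrow>
        Comp X h (Comp X g f) = Comp X (Comp X h g) f)"

definition hom :: "('o, 'm) category \<Rightarrow> 'o \<Rightarrow> 'o \<Rightarrow> 'm set" where
  "hom X x y = {f \<in> Arr X. Dom X f = x \<and> Cod X f = y}"

definition is_functor :: "('o, 'm) category \<Rightarrow> ('p, 'n) category
    \<Rightarrow> ('o \<Rightarrow> 'p) \<Rightarrow> ('m \<Rightarrow> 'n) \<Rightarrow> bool" where
  "is_functor X Y Fo Fm \<longleftrightarrow> is_category X \<and> is_category Y \<and>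
     (\<forall>x \<in> Obj X. Fo x \<in> Obj Y) \<and>
     (\<forall>f \<in> Arr X. Fm f \<in> Arr Y \<and> Dom Y (Fm f) = Fo (Dom X f) \<and> Cod Y (Fm f) = Fo (Cod X f)) \<and>
     (\<forall>x \<in> Obj X. Fm (Id X x) = Id Y (Fo x)) \<and>
     (\<forall>f \<in> Arr X. \<forall>g \<in> Arr X. Cod X f = Dom X g \<longrightarrow> Fm (Comp X g f) = Comp Y (Fm g) (Fm f))"

definition discrete_opfibration :: "('o, 'm) category \<Rightarrow> ('p, 'n) category
    \<Rightarrow> ('o \<Rightarrow> 'p) \<Rightarrow> ('m \<Rightarrow> 'n) \<Rightarrow> bool" where
  "discrete_opfibration X Y Fo Fm \<longleftrightarrow> is_functor X Y Fo Fm \<and>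
     (\<forall>x \<in> Obj X. \<forall>c \<in> Arr Y. Dom Y c = Fo x \<longrightarrow>
        (\<exists>!a. a \<in> Arr X \<and> Dom X a = x \<and> Fm a = c))"

definition opfib_lift :: "('o, 'm) category \<Rightarrow> ('m \<Rightarrow> 'n) \<Rightarrow> 'o \<Rightarrow> 'n \<Rightarrow> 'm" where
  "opfib_lift X Fm x c = (THE a. a \<in> Arr X \<and> Dom X a = x \<and> Fm a = c)"

definition cosieve :: "('o, 'm) category \<Rightarrow> ('p, 'n) category
    \<Rightarrow> ('o \<Rightarrow> 'p) \<Rightarrow> ('m \<Rightarrow> 'n) \<Rightarrow> bool" where
  "cosieve X Y Jo Jm \<longleftrightarrow> discrete_opfibration X Y Jo Jm \<and> inj_on Jo (Obj X)"

end

theory Submission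
  imports Defs
begin

text \<open>The map \<open>(A, c, b) \<mapsto> J(\<phi>\<^sub>A(c)) \<circ> b\<close> is constant on each generating pair
  \<open>(c, a \<circ> b) \<sim> (c \<circ> F a, b)\<close>, because the lift of \<open>c \<circ> F a\<close> at the domain of \<open>a\<close> is
  \<open>\<phi>(c) \<circ> a\<close>: both arrows start there and both are sent by \<open>F\<close> to \<open>c \<circ> F a\<close>.
  Functoriality of \<open>J\<close> and associativity in \<open>B\<close> finish the step, and a map constant on
  generating pairs is constant on the equivalence relation they generate.\<close>

lemma equivclp_imp_eq:
  assumes "\<And>p q. r p q \<Longrightarrow> f p = f q" and "equivclp r x y"
  shows "f x = f y"
  using assms(2) by (induction rule: equivclp_induct) (auto dest: assms(1))

lemma opfib_lift:
  assumes F: "discrete_opfibration X Y Fo Fm" and x: "x \<in> Obj X"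
    and c: "c \<in> Arr Y" "Dom Y c = Fo x"
  shows "opfib_lift X Fm x c \<in> Arr X" and "Dom X (opfib_lift X Fm x c) = x"
    and "Fm (opfib_lift X Fm x c) = c"
proof -
  have "\<exists>!a. a \<in> Arr X \<and> Dom X a = x \<and> Fm a = c"
    using F x c unfolding discrete_opfibration_def by blast
  then have "opfib_lift X Fm x c \<in> Arr X \<and> Dom X (opfib_lift X Fm x c) = x
      \<and> Fm (opfib_lift X Fm x c) = c"
    unfolding opfib_lift_def by (rule theI')
  then show "opfib_lift X Fm x c \<in> Arr X" "Dom X (opfib_lift X Fm x c) = x"
    "Fm (opfib_lift X Fm x c) = c" by blast+
qed

lemma opfib_lift_unique:
  assumes F: "discrete_opfibration X Y Fo Fm" and x: "x \<in> Obj X"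
    and a: "a \<in> Arr X" "Dom X a = x"
  shows "opfib_lift X Fm x (Fm a) = a"
proof -
  have "Fm a \<in> Arr Y" "Dom Y (Fm a) = Fo x"
    using F a unfolding discrete_opfibration_def is_functor_def by auto
  then have "\<exists>!a'. a' \<in> Arr X \<and> Dom X a' = x \<and> Fm a' = Fm a"
    using F x unfolding discrete_opfibration_def by blast
  then show ?thesis unfolding opfib_lift_def using a by (simp add: the1_equality)
qed

lemma opfib_lift_comp:
  assumes F: "discrete_opfibration X Y Fo Fm"
    and x1: "x1 \<in> Obj X" and x2: "x2 \<in> Obj X" and a: "a \<in> hom X x1 x2"
    and c: "c \<in> Arr Y" "Dom Y c = Fo x2"
  shows "opfib_lift X Fm x1 (Comp Y c (Fm a)) = Comp X (opfib_lift X Fm x2 c) a"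
proof -
  let ?l = "opfib_lift X Fm x2 c"
  have F_functor: "is_functor X Y Fo Fm" using F unfolding discrete_opfibration_def by blast
  then have cat: "is_category X" unfolding is_functor_def by blast
  have l: "?l \<in> Arr X" "Dom X ?l = x2" "Fm ?l = c"
    using opfib_lift[OF F x2 c] by blast+
  have a': "a \<in> Arr X" "Dom X a = x1" "Cod X a = x2" using a unfolding hom_def by auto
  have "Comp X ?l a \<in> Arr X" "Dom X (Comp X ?l a) = x1"
    using cat l a' unfolding is_category_def by auto
  moreover have "Fm (Comp X ?l a) = Comp Y c (Fm a)"
    using F_functor l a' unfolding is_functor_def by auto
  ultimately show ?thesis using opfib_lift_unique[OF F x1] by metis
qed

lemma comp_opfib_lift_generator_eq:
  assumes F: "discrete_opfibration A C Fo Fm" and J: "is_functor A B Jo Jm"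
    and x1: "x1 \<in> Obj A" and x2: "x2 \<in> Obj A" and a: "a \<in> hom A x1 x2"
    and c: "c \<in> Arr C" "Dom C c = Fo x2"
    and b: "b \<in> Arr B" "Cod B b = Jo x1"
  shows "Comp B (Jm (opfib_lift A Fm x2 c)) (Comp B (Jm a) b)
       = Comp B (Jm (opfib_lift A Fm x1 (Comp C c (Fm a)))) b"
proof -
  let ?l = "opfib_lift A Fm x2 c"
  have l: "?l \<in> Arr A" "Dom A ?l = x2" using opfib_lift[OF F x2 c] by blast+
  have a': "a \<in> Arr A" "Dom A a = x1" "Cod A a = x2" using a unfolding hom_def by auto
  have Jl: "Jm ?l \<in> Arr B" "Dom B (Jm ?l) = Jo x2"
    and Ja: "Jm a \<in> Arr B" "Dom B (Jm a) = Jo x1" "Cod B (Jm a) = Jo x2"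
    and J_comp: "Jm (Comp A ?l a) = Comp B (Jm ?l) (Jm a)"
    using J l a' unfolding is_functor_def by auto
  have "Comp B (Jm ?l) (Comp B (Jm a) b) = Comp B (Comp B (Jm ?l) (Jm a)) b"
    using J Jl Ja b unfolding is_functor_def is_category_def by auto
  also have "\<dots> = Comp B (Jm (opfib_lift A Fm x1 (Comp C c (Fm a)))) b"
    using opfib_lift_comp[OF F x1 x2 a c] J_comp by simp
  finally show ?thesis .
qed

theorem lemma5p3:
  fixes CA :: "('a, 'ma) category" and CB :: "('b, 'mb) category" and CC :: "('c, 'mc) category"
    and Fo :: "'a \<Rightarrow> 'c" and Fm :: "'ma \<Rightarrow> 'mc"
    and Jo :: "'a \<Rightarrow> 'b" and Jm :: "'ma \<Rightarrow> 'mb"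
    and B :: 'b and C :: 'c
    and rel :: "'a \<times> 'mc \<times> 'mb \<Rightarrow> 'a \<times> 'mc \<times> 'mb \<Rightarrow> bool"
  assumes F: "discrete_opfibration CA CC Fo Fm"
    and J: "cosieve CA CB Jo Jm"
    and B: "B \<in> Obj CB" "B \<notin> Jo ` Obj CA"
    and C: "C \<in> Obj CC"
    and rel_def: "rel = (\<lambda>p q. \<exists>A1 A2 b a c.
                      A1 \<in> Obj CA \<and> A2 \<in> Obj CA \<and>
                      b \<in> hom CB B (Jo A1) \<and> a \<in> hom CA A1 A2 \<and> c \<in> hom CC (Fo A2) C \<and>
                      p = (A2, c, Comp CB (Jm a) b) \<and> q = (A1, Comp CC c (Fm a), b))"
    and A1: "A1 \<in> Obj CA" and A2: "A2 \<in> Obj CA"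
    and b1: "b1 \<in> hom CB B (Jo A1)" and b2: "b2 \<in> hom CB B (Jo A2)"
    and c1: "c1 \<in> hom CC (Fo A1) C" and c2: "c2 \<in> hom CC (Fo A2) C"
    and sim: "equivclp rel (A1, c1, b1) (A2, c2, b2)"
  shows "Comp CB (Jm (opfib_lift CA Fm A1 c1)) b1 = Comp CB (Jm (opfib_lift CA Fm A2 c2)) b2"
proof -
  have J_functor: "is_functor CA CB Jo Jm"
    using J unfolding cosieve_def discrete_opfibration_def by blast
  let ?G = "\<lambda>(x, c, b). Comp CB (Jm (opfib_lift CA Fm x c)) b"
  have "?G p = ?G q" if "rel p q" for p q
    using that comp_opfib_lift_generator_eq[OF F J_functor]
    unfolding rel_def hom_def by auto
  from equivclp_imp_eq[of rel ?G, OF this sim] show ?thesis by simp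
qed

end
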